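(* Let $(X,G)$ be a dislocation space with $X$ a reflexive Banach space. If a sequence $(g_n)\subset G$ satisfies $g_n\rightharpoonup 0$ operator-weakly, then $g_n^{-1}\rightharpoonup 0$ operator-weakly as $n\to\infty$.
   Context: Dislocation space: a Banach space $X$ with a group $G\subset\mathcal{B}(X)$ (under composition) of bijective linear isometries such that (1) every $(g_n)\subset G$ with $g_n\not\rightharpoonup0$ has an operator-strongly convergent subsequence (limit in $\mathcal{B}(X)$), and (2) for every $(g_n)\subset G$ with $g_n\not\rightharpoonup0$ and every $(u_n)\subset X$ with $u_n\to0$ weakly, there is a subsequence with $g_{n_j}u_{n_j}\to0$ weakly. Here $A_n\rightharpoonup A$ (operator-weakly) means $A_nu\to Au$ weakly for all $u\in X$, and operator-strong convergence means $A_nu\to Au$ in norm for all $u$. *)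

theory Defs
  imports "HOL-Analysis.Analysis"
begin

definition weak_conv :: "(nat \<Rightarrow> 'a::real_normed_vector) \<Rightarrow> 'a \<Rightarrow> bool" where
  "weak_conv u x \<longleftrightarrow> (\<forall>f :: 'a \<Rightarrow>\<^sub>L real. (\<lambda>n. blinfun_apply f (u n)) \<longlonglongrightarrow> blinfun_apply f x)"

definition op_weak_conv :: "(nat \<Rightarrow> 'a \<Rightarrow> 'a::real_normed_vector) \<Rightarrow> ('a \<Rightarrow> 'a) \<Rightarrow> bool" where
  "op_weak_conv A B \<longleftrightarrow> (\<forall>u. weak_conv (\<lambda>n. A n u) (B u))"

definition op_strong_conv :: "(nat \<Rightarrow> 'a \<Rightarrow> 'a::real_normed_vector) \<Rightarrow> ('a \<Rightarrow> 'a) \<Rightarrow> bool" where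
  "op_strong_conv A B \<longleftrightarrow> (\<forall>u. (\<lambda>n. A n u) \<longlonglongrightarrow> B u)"

definition reflexive_space :: "'a::real_normed_vector itself \<Rightarrow> bool" where
  "reflexive_space _ \<longleftrightarrow>
     (\<forall>\<Phi> :: ('a \<Rightarrow>\<^sub>L real) \<Rightarrow>\<^sub>L real. \<exists>x :: 'a. \<forall>f. blinfun_apply \<Phi> f = blinfun_apply f x)"

text \<open>Dislocation space (X,G): G a group (under composition) of bijective linear
isometries of X satisfying conditions (1) and (2).\<close>
definition dislocation_space :: "('a::banach \<Rightarrow>\<^sub>L 'a) set \<Rightarrow> bool" where
  "dislocation_space G \<longleftrightarrow>
     id_blinfun \<in> G \<and>
     (\<forall>g\<in>G. \<forall>h\<in>G. g o\<^sub>L h \<in> G) \<and>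
     (\<forall>g\<in>G. \<exists>h\<in>G. h o\<^sub>L g = id_blinfun \<and> g o\<^sub>L h = id_blinfun) \<and>
     (\<forall>g\<in>G. bij (blinfun_apply g) \<and> (\<forall>x. norm (blinfun_apply g x) = norm x)) \<and>
     (\<forall>gs. range gs \<subseteq> G \<and> \<not> op_weak_conv (\<lambda>n. blinfun_apply (gs n)) (\<lambda>_. 0) \<longrightarrow>
        (\<exists>r (A :: 'a \<Rightarrow>\<^sub>L 'a). strict_mono r \<and>
            op_strong_conv (\<lambda>j. blinfun_apply (gs (r j))) (blinfun_apply A))) \<and>
     (\<forall>gs u. range gs \<subseteq> G \<and> \<not> op_weak_conv (\<lambda>n. blinfun_apply (gs n)) (\<lambda>_. 0)
              \<and> weak_conv u 0 \<longrightarrow>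
        (\<exists>r. strict_mono r \<and> weak_conv (\<lambda>j. blinfun_apply (gs (r j)) (u (r j))) 0))"

end

theory Submission
  imports Defs "HOL-Library.Infinite_Set"
begin

text \<open>If \<open>g\<^sub>n \<rightharpoonup> 0\<close> but \<open>g\<^sub>n\<^sup>-\<^sup>1 \<not>\<rightharpoonup> 0\<close>, then by condition (1) a subsequence of the
inverses converges strongly to some \<open>A\<close>. Since the \<open>g\<^sub>n\<close> are isometries, \<open>g\<^sub>n\<^sub>j (A u) \<rightarrow> u\<close>
in norm for every \<open>u\<close>; testing with the functional \<open>f \<circ> A\<close> and using \<open>g\<^sub>n \<rightharpoonup> 0\<close> gives
\<open>f (A u) = 0\<close> for every functional \<open>f\<close>, contradicting the choice of the subsequence.\<close>

lemma op_weak_conv_subseq: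
  fixes A :: "nat \<Rightarrow> 'a \<Rightarrow> 'a::real_normed_vector"
  assumes "op_weak_conv A B" and "strict_mono r"
  shows "op_weak_conv (\<lambda>n. A (r n)) B"
  unfolding op_weak_conv_def weak_conv_def
proof (intro allI)
  fix u and f :: "'a \<Rightarrow>\<^sub>L real"
  have "(\<lambda>n. blinfun_apply f (A n u)) \<longlonglongrightarrow> blinfun_apply f (B u)"
    using assms(1) unfolding op_weak_conv_def weak_conv_def by blast
  from LIMSEQ_subseq_LIMSEQ[OF this assms(2)]
  show "(\<lambda>n. blinfun_apply f (A (r n) u)) \<longlonglongrightarrow> blinfun_apply f (B u)"
    by (simp add: comp_def)
qed

lemma op_weak_conv_zeroD:
  fixes A :: "nat \<Rightarrow> 'a \<Rightarrow> 'a::real_normed_vector"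
    and f :: "'a \<Rightarrow>\<^sub>L real"
  assumes "op_weak_conv A (\<lambda>_. 0)"
  shows "(\<lambda>n. blinfun_apply f (A n u)) \<longlonglongrightarrow> 0"
  using assms unfolding op_weak_conv_def weak_conv_def by (metis blinfun.zero_right)

lemma not_op_weak_conv_zero_if_bounded_away:
  fixes A :: "nat \<Rightarrow> 'a \<Rightarrow> 'a::real_normed_vector"
    and f :: "'a \<Rightarrow>\<^sub>L real" and e :: real
  assumes "e > 0" and "\<And>n. e \<le> \<bar>blinfun_apply f (A n u)\<bar>"
  shows "\<not> op_weak_conv A (\<lambda>_. 0)"
proof
  assume "op_weak_conv A (\<lambda>_. 0)"
  then have "(\<lambda>n. blinfun_apply f (A n u)) \<longlonglongrightarrow> 0"
    by (rule op_weak_conv_zeroD)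
  then obtain N where "\<forall>n\<ge>N. norm (blinfun_apply f (A n u)) < e"
    using assms(1) unfolding LIMSEQ_iff by fastforce
  then show False using assms(2)[of N] by auto
qed

lemma not_op_weak_conv_zeroE:
  fixes A :: "nat \<Rightarrow> 'a \<Rightarrow> 'a::real_normed_vector"
  assumes "\<not> op_weak_conv A (\<lambda>_. 0)"
  obtains u and f :: "'a \<Rightarrow>\<^sub>L real" and e :: real and s :: "nat \<Rightarrow> nat"
  where "e > 0" "strict_mono s" "\<And>n. e \<le> \<bar>blinfun_apply f (A (s n) u)\<bar>"
proof -
  obtain u and f :: "'a \<Rightarrow>\<^sub>L real" where "\<not> (\<lambda>n. blinfun_apply f (A n u)) \<longlonglongrightarrow> 0"
    using assms unfolding op_weak_conv_def weak_conv_def by auto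
  then obtain e
    where e: "e > 0" and frequent: "\<forall>N. \<exists>n\<ge>N. e \<le> \<bar>blinfun_apply f (A n u)\<bar>"
    unfolding LIMSEQ_iff by (auto simp: not_less)
  have "infinite {n. e \<le> \<bar>blinfun_apply f (A n u)\<bar>}"
    unfolding infinite_nat_iff_unbounded_le using frequent by auto
  then obtain s :: "nat \<Rightarrow> nat"
    where "strict_mono s" "\<And>n. s n \<in> {n. e \<le> \<bar>blinfun_apply f (A n u)\<bar>}"
    using infinite_enumerate by blast
  with e that show ?thesis by blast
qed

lemma strong_limit_of_inverses_annihilated:
  fixes g h :: "nat \<Rightarrow> 'a::real_normed_vector \<Rightarrow>\<^sub>L 'a" and A :: "'a \<Rightarrow>\<^sub>L 'a"
    and f :: "'a \<Rightarrow>\<^sub>L real"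
  assumes isometry: "\<And>n x. norm (blinfun_apply (g n) x) = norm x"
    and right_inverse: "\<And>n x. blinfun_apply (g n) (blinfun_apply (h n) x) = x"
    and g_weak: "op_weak_conv (\<lambda>n. blinfun_apply (g n)) (\<lambda>_. 0)"
    and h_strong: "op_strong_conv (\<lambda>n. blinfun_apply (h n)) (blinfun_apply A)"
  shows "blinfun_apply f (blinfun_apply A u) = 0"
proof -
  define v where "v = blinfun_apply A u"
  have "(\<lambda>n. blinfun_apply (h n) u) \<longlonglongrightarrow> v"
    using h_strong unfolding op_strong_conv_def v_def by blast
  then have "(\<lambda>n. norm (blinfun_apply (h n) u - v)) \<longlonglongrightarrow> 0"
    by (intro tendsto_norm_zero LIM_zero)
  moreover have "norm (blinfun_apply (g n) v - u) = norm (blinfun_apply (h n) u - v)" for n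
  proof -
    have "blinfun_apply (g n) v - u = blinfun_apply (g n) (v - blinfun_apply (h n) u)"
      by (simp add: blinfun.diff_right right_inverse)
    then show ?thesis by (simp add: isometry norm_minus_commute)
  qed
  ultimately have "(\<lambda>n. norm (blinfun_apply (g n) v - u)) \<longlonglongrightarrow> 0"
    by simp
  then have "(\<lambda>n. blinfun_apply (g n) v - u) \<longlonglongrightarrow> 0"
    by (simp only: tendsto_norm_zero_iff)
  then have g_v: "(\<lambda>n. blinfun_apply (g n) v) \<longlonglongrightarrow> u"
    by (rule LIM_zero_cancel)
  have "(\<lambda>n. blinfun_apply (f o\<^sub>L A) (blinfun_apply (g n) v))
      \<longlonglongrightarrow> blinfun_apply (f o\<^sub>L A) u"
    by (rule blinfun.tendsto[OF tendsto_const g_v])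
  moreover have "(\<lambda>n. blinfun_apply (f o\<^sub>L A) (blinfun_apply (g n) v)) \<longlonglongrightarrow> 0"
    using g_weak by (rule op_weak_conv_zeroD)
  ultimately have "blinfun_apply (f o\<^sub>L A) u = 0"
    by (rule LIMSEQ_unique)
  then show ?thesis by simp
qed

lemma dislocation_space_inverses:
  assumes "dislocation_space G" and "\<And>n. g n \<in> G"
  obtains h where "\<And>n. h n \<in> G"
    and "\<And>n. inv (blinfun_apply (g n)) = blinfun_apply (h n)"
    and "\<And>n x. blinfun_apply (g n) (blinfun_apply (h n) x) = x"
proof -
  have "\<forall>n. \<exists>k\<in>G. k o\<^sub>L g n = id_blinfun \<and> g n o\<^sub>L k = id_blinfun"
    using assms unfolding dislocation_space_def by simp
  then obtain h where hG: "\<And>n. h n \<in> G" and "\<And>n. h n o\<^sub>L g n = id_blinfun"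
    and "\<And>n. g n o\<^sub>L h n = id_blinfun" by metis
  then have h_g: "blinfun_apply (h n) (blinfun_apply (g n) x) = x"
    and g_h: "blinfun_apply (g n) (blinfun_apply (h n) x) = x" for n x
    by (metis blinfun_apply_blinfun_compose blinfun_apply_id_blinfun)+
  have "inv (blinfun_apply (g n)) = blinfun_apply (h n)" for n
    by (rule inv_unique_comp) (simp_all add: fun_eq_iff h_g g_h)
  then show ?thesis
    using that[OF hG] g_h by simp
qed

theorem mainTheorem4:
  fixes G :: "('a::banach \<Rightarrow>\<^sub>L 'a) set" and g :: "nat \<Rightarrow> ('a \<Rightarrow>\<^sub>L 'a)"
  assumes "dislocation_space G"
    and "reflexive_space TYPE('a)"
    and "\<And>n. g n \<in> G"
    and "op_weak_conv (\<lambda>n. blinfun_apply (g n)) (\<lambda>_. 0)"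
  shows "op_weak_conv (\<lambda>n. inv (blinfun_apply (g n))) (\<lambda>_. 0)"
proof (rule ccontr)
  obtain h where hG: "\<And>n. h n \<in> G"
    and inv_g: "\<And>n. inv (blinfun_apply (g n)) = blinfun_apply (h n)"
    and right_inverse: "\<And>n x. blinfun_apply (g n) (blinfun_apply (h n) x) = x"
    using dislocation_space_inverses assms(1,3) by blast
  assume "\<not> op_weak_conv (\<lambda>n. inv (blinfun_apply (g n))) (\<lambda>_. 0)"
  then obtain u and f :: "'a \<Rightarrow>\<^sub>L real" and e :: real and s :: "nat \<Rightarrow> nat"
    where e: "e > 0" and s: "strict_mono s"
    and away: "\<And>n. e \<le> \<bar>blinfun_apply f (blinfun_apply (h (s n)) u)\<bar>"
    unfolding inv_g by (rule not_op_weak_conv_zeroE) blast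
  have "\<not> op_weak_conv (\<lambda>n. blinfun_apply (h (s n))) (\<lambda>_. 0)"
    using e away by (rule not_op_weak_conv_zero_if_bounded_away)
  moreover have "range (\<lambda>n. h (s n)) \<subseteq> G"
    using hG by auto
  ultimately obtain r A where r: "strict_mono r"
    and strong: "op_strong_conv (\<lambda>j. blinfun_apply (h (s (r j)))) (blinfun_apply A)"
    using assms(1) unfolding dislocation_space_def by blast
  have "op_weak_conv (\<lambda>j. blinfun_apply (g (s (r j)))) (\<lambda>_. 0)"
    using op_weak_conv_subseq[OF assms(4) strict_mono_o[OF s r]] by (simp add: comp_def)
  moreover have "\<And>n x. norm (blinfun_apply (g n) x) = norm x"
    using assms(1,3) unfolding dislocation_space_def by blast
  ultimately have f_A: "blinfun_apply f (blinfun_apply A u) = 0"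
    using strong right_inverse by (intro strong_limit_of_inverses_annihilated)
  have "(\<lambda>j. blinfun_apply (h (s (r j))) u) \<longlonglongrightarrow> blinfun_apply A u"
    using strong unfolding op_strong_conv_def by blast
  then have "(\<lambda>j. \<bar>blinfun_apply f (blinfun_apply (h (s (r j))) u)\<bar>)
      \<longlonglongrightarrow> \<bar>blinfun_apply f (blinfun_apply A u)\<bar>"
    by (intro tendsto_rabs blinfun.tendsto[OF tendsto_const])
  then have "e \<le> \<bar>blinfun_apply f (blinfun_apply A u)\<bar>"
    by (rule tendsto_lowerbound) (use away in auto)
  then show False using f_A e by simp
qed

end
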